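(* Assume that $1 \le t \le r$ and $k \in \mathbb{Z}$. Then we have \begin{equation*} \sum_{s = 0}^r(-1)^s\begin{bmatrix} r \\ s \end{bmatrix} \begin{bmatrix} t + k - s -1 \\ t - 1 \end{bmatrix} \begin{bmatrix} r + k - s \\ r - t \end{bmatrix} = 0. \end{equation*}
   Context: $q$ is an indeterminate, $r \ge 2$ is a fixed integer, $[n] = \frac{q^n - q^{-n}}{q - q^{-1}}$ for $n \in \mathbb{Z}$, $[m]^! = [1][2]\cdots[m]$, and for $n \in \mathbb{Z}$, $m \in \mathbb{N}$, the quantum binomial coefficient is $\begin{bmatrix} n \\ m\end{bmatrix} = \frac{[n][n-1]\cdots[n-m+1]}{[m]^!}$ for $m \ge 1$ and $\begin{bmatrix} n \\ 0\end{bmatrix} = 1$ (so the top entry may be negative). *)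

theory Defs
  imports "HOL-Computational_Algebra.Polynomial" "HOL-Computational_Algebra.Fraction_Field"
begin

definition qvar :: "rat poly fract" where
  "qvar = Fract [:0, 1:] 1"

definition qint :: "int \<Rightarrow> rat poly fract" where
  "qint n = (qvar powi n - qvar powi (-n)) / (qvar - inverse qvar)"

definition qfact :: "nat \<Rightarrow> rat poly fract" where
  "qfact m = (\<Prod>i\<in>{1..m}. qint (int i))"

definition qbinom :: "int \<Rightarrow> nat \<Rightarrow> rat poly fract" where
  "qbinom n m = (if m = 0 then 1 else (\<Prod>i\<in>{0..<m}. qint (n - int i)) / qfact m)"

end

theory Submission
  imports Defs
begin

text \<open>
  Since [a - s] = (q^a q^(-s) - q^(-a) q^s) / (q - q^(-1)), a product of d quantum integers of
  the form [a - s] is, as a function of s, a linear combination of q^((2j - d) s) for 0 \<le> j \<le> d.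
  The two quantum binomials in the summand have total degree (t - 1) + (r - t) = r - 1, so the
  sum is a combination of the alternating sums \<Sum>s (-1)^s [r choose s] q^(c s) with
  c \<in> {-(r-1), -(r-3), ..., r-1}. By the Gaussian binomial theorem such a sum equals
  \<Prod>i<r (1 - q^(c + r - 1 - 2 i)), and for these c one of the factors is 1 - q^0 = 0.
\<close>

lemma Fract_one_power: "Fract (a :: 'a :: idom) 1 ^ n = Fract (a ^ n) 1"
  by (induction n) (simp_all add: One_fract_def)

lemma qvar_power: "qvar ^ n = Fract (monom 1 n) 1"
  unfolding qvar_def Fract_one_power by (simp add: monom_altdef)

lemma qvar_nonzero: "qvar \<noteq> 0"
  by (simp add: qvar_def Zero_fract_def eq_fract)

lemma qvar_power_eq_1_iff: "qvar ^ n = 1 \<longleftrightarrow> n = 0"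
  by (auto simp add: qvar_power One_fract_def eq_fract monom_eq_1_iff)

lemma qvar_powi_eq_1_iff: "qvar powi n = 1 \<longleftrightarrow> n = 0"
proof (cases "n \<ge> 0")
  case True
  then show ?thesis
    using qvar_power_eq_1_iff[of "nat n"] by (simp add: power_int_def)
next
  case False
  then show ?thesis
    using qvar_power_eq_1_iff[of "nat (-n)"] by (simp add: power_int_def power_inverse)
qed

lemma qint_eq_0_iff: "qint n = 0 \<longleftrightarrow> n = 0"
proof -
  have "qvar powi a = qvar powi (-a) \<longleftrightarrow> a = 0" for a
  proof -
    have "qvar powi a \<noteq> 0"
      using qvar_nonzero by simp
    then have "qvar powi a = qvar powi (-a) \<longleftrightarrow> qvar powi a * qvar powi a = 1"
      by (auto simp: power_int_minus field_simps)
    also have "qvar powi a * qvar powi a = qvar powi (a + a)"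
      by (rule power_int_add[symmetric]) (simp add: qvar_nonzero)
    finally have "qvar powi a = qvar powi (-a) \<longleftrightarrow> qvar powi (a + a) = 1" .
    then show ?thesis
      by (simp add: qvar_powi_eq_1_iff)
  qed
  from this[of 1] this[of n] show ?thesis
    by (simp add: qint_def)
qed

lemma qfact_nonzero: "qfact m \<noteq> 0"
  by (simp add: qfact_def qint_eq_0_iff)

lemma qint_add: "qint (a + b) = qvar powi (-b) * qint a + qvar powi a * qint b"
proof -
  define A B where "A = qvar powi a" and "B = qvar powi b"
  have "A \<noteq> 0" "B \<noteq> 0"
    using qvar_nonzero by (auto simp: A_def B_def)
  then have key: "A * B - inverse (A * B) = inverse B * (A - inverse A) + A * (B - inverse B)"
    by (simp add: field_simps)
  have "qvar powi (a + b) = A * B"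
    unfolding A_def B_def by (rule power_int_add) (simp add: qvar_nonzero)
  then have "qint (a + b) = (A * B - inverse (A * B)) / (qvar - inverse qvar)"
    by (metis qint_def power_int_minus)
  also have "\<dots> = qvar powi (-b) * qint a + qvar powi a * qint b"
    unfolding key by (simp add: qint_def A_def B_def power_int_minus add_divide_distrib)
  finally show ?thesis .
qed

lemma qbinom_eq_prod_div: "qbinom n m = (\<Prod>i<m. qint (n - int i)) / qfact m"
  by (simp add: qbinom_def qfact_def atLeast0LessThan)

lemma qfact_Suc: "qfact (Suc m) = qfact m * qint (int m + 1)"
  unfolding qfact_def by (simp add: prod.cl_ivl_Suc add.commute)

lemma qbinom_pascal:
  "qbinom (n + 1) (Suc s) = qvar powi (-(int s + 1)) * qbinom n (Suc s) + qvar powi (n - int s) * qbinom n s"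
proof -
  define P where "P = (\<Prod>i<s. qint (n - int i))"
  have top: "(\<Prod>i<Suc s. qint (n + 1 - int i)) = qint (n + 1) * P"
    unfolding P_def prod.lessThan_Suc_shift by simp
  have bottom: "(\<Prod>i<Suc s. qint (n - int i)) = P * qint (n - int s)"
    unfolding P_def by simp
  have "qint (n + 1) = qvar powi (-(int s + 1)) * qint (n - int s) + qvar powi (n - int s) * qint (int s + 1)"
    using qint_add[of "n - int s" "int s + 1"] by simp
  moreover have "qint (int s + 1) \<noteq> 0" "qfact s \<noteq> 0"
    by (simp_all add: qint_eq_0_iff qfact_nonzero)
  ultimately show ?thesis
    unfolding qbinom_eq_prod_div top bottom qfact_Suc P_def[symmetric] by (simp add: field_simps)
qed

lemma qbinom_of_nat_eq_0: "r < s \<Longrightarrow> qbinom (int r) s = 0"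
  by (force simp: qbinom_eq_prod_div qint_def)

lemma qvar_powi_mult_powi: "qvar powi a * qvar powi b = qvar powi (a + b)"
  by (rule power_int_add[symmetric]) (simp add: qvar_nonzero)

definition qbinom_alt_sum :: "nat \<Rightarrow> int \<Rightarrow> rat poly fract" where
  "qbinom_alt_sum r c = (\<Sum>s\<le>r. (-1) ^ s * qbinom (int r) s * qvar powi (c * int s))"

lemma qbinom_alt_sum_Suc:
  "qbinom_alt_sum (Suc r) c = (1 - qvar powi (int r + c)) * qbinom_alt_sum r (c - 1)"
proof -
  define g where "g s = (-1) ^ s * qbinom (int r) s * qvar powi ((c - 1) * int s)" for s
  have term_Suc: "(-1) ^ Suc s * qbinom (int (Suc r)) (Suc s) * qvar powi (c * int (Suc s))
      = g (Suc s) - qvar powi (int r + c) * g s" for s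
  proof -
    have "qvar powi (-(int s + 1)) * qvar powi (c * int (Suc s)) = qvar powi ((c - 1) * int (Suc s))"
      "qvar powi (int r - int s) * qvar powi (c * int (Suc s)) = qvar powi (int r + c) * qvar powi ((c - 1) * int s)"
      unfolding qvar_powi_mult_powi by (simp_all add: algebra_simps)
    then show ?thesis
      using qbinom_pascal[of "int r" s] by (simp add: g_def algebra_simps)
  qed
  have "qbinom_alt_sum (Suc r) c = 1 + (\<Sum>s\<le>r. g (Suc s) - qvar powi (int r + c) * g s)"
    unfolding qbinom_alt_sum_def sum.atMost_Suc_shift term_Suc by (simp add: qbinom_def)
  also have "\<dots> = (1 + (\<Sum>s\<le>r. g (Suc s))) - qvar powi (int r + c) * (\<Sum>s\<le>r. g s)"
    by (simp add: sum_subtractf sum_distrib_left)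
  also have "1 + (\<Sum>s\<le>r. g (Suc s)) = (\<Sum>s\<le>Suc r. g s)"
    unfolding sum.atMost_Suc_shift by (simp add: g_def qbinom_def)
  also have "(\<Sum>s\<le>Suc r. g s) = (\<Sum>s\<le>r. g s)"
    by (simp add: g_def qbinom_of_nat_eq_0)
  also have "(\<Sum>s\<le>r. g s) = qbinom_alt_sum r (c - 1)"
    unfolding qbinom_alt_sum_def g_def ..
  finally show ?thesis
    by (simp add: algebra_simps)
qed

lemma qbinom_alt_sum_eq_prod:
  "qbinom_alt_sum r c = (\<Prod>i<r. 1 - qvar powi (c + int r - 1 - 2 * int i))"
proof (induction r arbitrary: c)
  case 0
  then show ?case
    by (simp add: qbinom_alt_sum_def qbinom_def)
next
  case (Suc r)
  have "qbinom_alt_sum (Suc r) c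
      = (1 - qvar powi (int r + c)) * (\<Prod>i<r. 1 - qvar powi (c - 1 + int r - 1 - 2 * int i))"
    by (simp only: qbinom_alt_sum_Suc Suc.IH)
  then show ?case
    unfolding prod.lessThan_Suc_shift by (simp add: algebra_simps)
qed

lemma qbinom_alt_sum_eq_0:
  assumes "\<bar>c\<bar> < int r" and "odd (c + int r)"
  shows "qbinom_alt_sum r c = 0"
proof -
  define i where "i = nat ((c + int r - 1) div 2)"
  have "i < r" "c + int r - 1 - 2 * int i = 0"
    using assms unfolding i_def by (auto elim!: oddE)
  then show ?thesis
    unfolding qbinom_alt_sum_eq_prod by (force intro: prod_zero)
qed

text \<open>Equivalently, g s is a linear combination of q^((2j - m) s) for 0 \<le> j \<le> m.\<close>

definition qlaurent_seq :: "nat \<Rightarrow> (nat \<Rightarrow> rat poly fract) \<Rightarrow> bool" where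
  "qlaurent_seq m g \<longleftrightarrow> (\<exists>p. degree p \<le> m \<and> (\<forall>s. g s = poly p ((qvar ^ 2) ^ s) / qvar ^ (m * s)))"

lemma qlaurent_seq_mult:
  assumes "qlaurent_seq a f" "qlaurent_seq b g"
  shows "qlaurent_seq (a + b) (\<lambda>s. f s * g s)"
proof -
  obtain p where p: "degree p \<le> a" "\<And>s. f s = poly p ((qvar ^ 2) ^ s) / qvar ^ (a * s)"
    using assms(1) qlaurent_seq_def by auto
  obtain q where q: "degree q \<le> b" "\<And>s. g s = poly q ((qvar ^ 2) ^ s) / qvar ^ (b * s)"
    using assms(2) qlaurent_seq_def by auto
  have "degree (p * q) \<le> a + b"
    using p(1) q(1) degree_mult_le[of p q] by linarith
  moreover have "f s * g s = poly (p * q) ((qvar ^ 2) ^ s) / qvar ^ ((a + b) * s)" for s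
    unfolding p(2) q(2) by (simp add: power_add add_mult_distrib)
  ultimately show ?thesis
    unfolding qlaurent_seq_def by blast
qed

lemma qlaurent_seq_prod:
  assumes "finite I" "\<And>i. i \<in> I \<Longrightarrow> qlaurent_seq (m i) (f i)"
  shows "qlaurent_seq (\<Sum>i\<in>I. m i) (\<lambda>s. \<Prod>i\<in>I. f i s)"
  using assms
proof (induction I rule: finite_induct)
  case empty
  show ?case
    unfolding qlaurent_seq_def by (auto intro: exI[of _ 1])
next
  case (insert i I)
  then show ?case
    using qlaurent_seq_mult[of "m i" "f i"] by simp
qed

lemma qlaurent_seq_divide:
  assumes "qlaurent_seq m f"
  shows "qlaurent_seq m (\<lambda>s. f s / a)"
proof -
  obtain p where p: "degree p \<le> m" "\<And>s. f s = poly p ((qvar ^ 2) ^ s) / qvar ^ (m * s)"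
    using assms qlaurent_seq_def by auto
  have "degree (smult (1 / a) p) \<le> m" "\<And>s. f s / a = poly (smult (1 / a) p) ((qvar ^ 2) ^ s) / qvar ^ (m * s)"
    using p by simp_all
  then show ?thesis
    unfolding qlaurent_seq_def by blast
qed

lemma qlaurent_seq_qint: "qlaurent_seq 1 (\<lambda>s. qint (a - int s))"
proof -
  define A D where "A = qvar powi a" and "D = qvar - inverse qvar"
  have nz: "A \<noteq> 0" "D \<noteq> 0"
    using qvar_nonzero qint_eq_0_iff[of 1] by (auto simp: A_def D_def qint_def)
  define p where "p = [: A / D, - 1 / (A * D) :]"
  have "qint (a - int s) = poly p ((qvar ^ 2) ^ s) / qvar ^ (1 * s)" for s
  proof -
    have pos: "qvar powi (a - int s) = A / qvar ^ s"
      using qvar_nonzero by (simp add: A_def power_int_diff)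
    then have neg: "qvar powi (-(a - int s)) = qvar ^ s / A"
      by (metis power_int_minus inverse_divide)
    have "(qvar ^ 2) ^ s = qvar ^ s * qvar ^ s"
      by (simp add: power2_eq_square power_mult_distrib)
    then show ?thesis
      unfolding qint_def pos neg D_def[symmetric] p_def using nz qvar_nonzero
      by (simp add: field_simps)
  qed
  moreover have "degree p \<le> 1"
    by (simp add: p_def)
  ultimately show ?thesis
    unfolding qlaurent_seq_def by blast
qed

lemma qlaurent_seq_qbinom: "qlaurent_seq m (\<lambda>s. qbinom (n - int s) m)"
proof -
  have "qlaurent_seq (\<Sum>i<m. 1) (\<lambda>s. \<Prod>i<m. qint ((n - int i) - int s))"
    by (intro qlaurent_seq_prod qlaurent_seq_qint) simp
  then show ?thesis
    unfolding qbinom_eq_prod_div using qlaurent_seq_divide by (simp add: algebra_simps)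
qed

lemma qlaurent_seq_eq_sum:
  assumes "qlaurent_seq m g"
  obtains c where "\<And>s. g s = (\<Sum>j\<le>m. c j * qvar powi ((2 * int j - int m) * int s))"
proof -
  obtain p where p: "degree p \<le> m" "\<And>s. g s = poly p ((qvar ^ 2) ^ s) / qvar ^ (m * s)"
    using assms qlaurent_seq_def by auto
  have "g s = (\<Sum>j\<le>m. coeff p j * qvar powi ((2 * int j - int m) * int s))" for s
  proof -
    have "poly p ((qvar ^ 2) ^ s) = (\<Sum>j\<le>m. coeff p j * ((qvar ^ 2) ^ s) ^ j)"
      unfolding poly_altdef using p(1) by (intro sum.mono_neutral_left) (auto simp: coeff_eq_0)
    moreover have "((qvar ^ 2) ^ s) ^ j / qvar ^ (m * s) = qvar powi ((2 * int j - int m) * int s)" for j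
    proof -
      have "((qvar ^ 2) ^ s) ^ j / qvar ^ (m * s) = qvar ^ (2 * s * j) / qvar ^ (m * s)"
        by (simp add: power_mult[symmetric] mult_ac)
      also have "\<dots> = qvar powi int (2 * s * j) / qvar powi int (m * s)"
        by (simp only: power_int_of_nat)
      also have "\<dots> = qvar powi (int (2 * s * j) - int (m * s))"
        using qvar_nonzero by (simp add: power_int_diff)
      finally show ?thesis
        by (simp add: algebra_simps)
    qed
    ultimately show ?thesis
      unfolding p(2) by (simp add: sum_divide_distrib flip: times_divide_eq_right)
  qed
  then show ?thesis
    by (rule that)
qed

lemma qbinom_alt_sum_qlaurent_seq_eq_0:
  assumes "qlaurent_seq (r - 1) g" and "0 < r"
  shows "(\<Sum>s\<le>r. (-1) ^ s * qbinom (int r) s * g s) = 0"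
proof -
  obtain c where g: "\<And>s. g s = (\<Sum>j\<le>r - 1. c j * qvar powi ((2 * int j - int (r - 1)) * int s))"
    using qlaurent_seq_eq_sum[OF assms(1)] by blast
  have "(\<Sum>s\<le>r. (-1) ^ s * qbinom (int r) s * g s)
      = (\<Sum>j\<le>r - 1. c j * qbinom_alt_sum r (2 * int j - int (r - 1)))"
    unfolding g qbinom_alt_sum_def sum_distrib_left sum.swap[of _ "{..r}"] by (simp add: mult_ac)
  also have "\<dots> = 0"
    using assms(2) by (intro sum.neutral ballI) (simp add: qbinom_alt_sum_eq_0)
  finally show ?thesis .
qed

theorem lemma5p6:
  fixes r t :: nat and k :: int
  assumes "r \<ge> 2" and "1 \<le> t" and "t \<le> r"
  shows "(\<Sum>s = 0..r. (-1) ^ s * qbinom (int r) s * qbinom (int t + k - int s - 1) (t - 1)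
            * qbinom (int r + k - int s) (r - t)) = 0"
proof -
  have "qlaurent_seq ((t - 1) + (r - t))
      (\<lambda>s. qbinom ((int t + k - 1) - int s) (t - 1) * qbinom ((int r + k) - int s) (r - t))"
    by (intro qlaurent_seq_mult qlaurent_seq_qbinom)
  moreover have "(t - 1) + (r - t) = r - 1"
    using assms by simp
  ultimately have "qlaurent_seq (r - 1)
      (\<lambda>s. qbinom (int t + k - int s - 1) (t - 1) * qbinom (int r + k - int s) (r - t))"
    by (simp add: algebra_simps)
  from qbinom_alt_sum_qlaurent_seq_eq_0[OF this] assms show ?thesis
    by (simp add: atLeast0AtMost mult.assoc)
qed

end
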